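(* Consider a tree power network $(\mathcal{V},\mathcal{E})$, $\mathcal{V}=\{1,\dots,n\}$, with angle limits $\underline{\theta}_{ik}\le\overline{\theta}_{ik}$ satisfying $|\underline{\theta}_{ik}|,|\overline{\theta}_{ik}|<90^\circ$, $\underline{\theta}_{ik}\le 0\le\overline{\theta}_{ik}$, and bus power upper bounds $P_i\le\overline{P}_i$ (no lower bounds). Then for every $\tilde{\mathbf{v}}\in\mathbb{R}^n_{>0}$: (a) $\mathcal{O}(\mathcal{P}_\theta(\tilde{\mathbf{v}}))=\mathcal{O}(\overline{\mathrm{conv}}(\mathcal{P}_\theta(\tilde{\mathbf{v}})))$; (b) $\mathcal{O}(\mathcal{P}(\tilde{\mathbf{v}}))=\mathcal{O}(\overline{\mathrm{conv}}(\mathcal{P}_\theta(\tilde{\mathbf{v}}))\cap\mathcal{P}_P)$; and for any $0<\underline{\mathbf{v}}\le\overline{\mathbf{v}}$ in $\mathbb{R}^n$, (c) $\bigcup_{\underline{\mathbf{v}}\le\tilde{\mathbf{v}}\le\overline{\mathbf{v}}}\overline{\mathrm{conv}}(\mathcal{P}_\theta(\tilde{\mathbf{v}}))$ is a convex set.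
   Context: Each line $(i,k)$ has admittance $y_{ik}=g_{ik}-jb_{ik}$, $g_{ik},b_{ik}\ge0$. For fixed voltage magnitudes $|V_i|=\tilde V_i$, the flows on line $(i,k)$ with $\theta_{ik}=\theta_i-\theta_k$ are $P_{ik}=\tilde V_i^2 g_{ik}+\tilde V_i\tilde V_k b_{ik}\sin\theta_{ik}-\tilde V_i\tilde V_k g_{ik}\cos\theta_{ik}$, $P_{ki}=\tilde V_k^2 g_{ik}-\tilde V_i\tilde V_k b_{ik}\sin\theta_{ik}-\tilde V_i\tilde V_k g_{ik}\cos\theta_{ik}$; $\mathcal{F}_{\theta_{ik}}(\tilde{\mathbf{v}})$ is the set of such $(P_{ik},P_{ki})$ for $\theta_{ik}\in[\underline{\theta}_{ik},\overline{\theta}_{ik}]$. $\mathbf{A}$ is the $n\times2|\mathcal{E}|$ matrix with $A(i,(k,l))=1$ if $i=k$ and $0$ otherwise (so $(\mathbf{A}\mathbf{f})_i=\sum_{k\sim i}P_{ik}$). $\mathcal{P}_\theta(\tilde{\mathbf{v}})=\mathbf{A}\prod_{(i,k)\in\mathcal{E}}\mathcal{F}_{\theta_{ik}}(\tilde{\mathbf{v}})$, $\mathcal{P}_P=\{\mathbf{p}:P_i\le\overline{P}_i\ \forall i\}$, $\mathcal{P}(\tilde{\mathbf{v}})=\mathcal{P}_\theta(\tilde{\mathbf{v}})\cap\mathcal{P}_P$. For a Hermitian $n\times n$ matrix $\mathbf{W}$, $W_{ik}$ is its $(i,k)$ entry and $\mathbf{W}_{ik}$ its $2\times2$ submatrix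 on rows/columns $i,k$. Let $\mathcal{H}_{ik}(\tilde{\mathbf{v}})$ be the set of Hermitian $\mathbf{W}$ with $\mathbf{W}_{ik}$ positive semidefinite, $W_{ii}=\tilde V_i^2$, $W_{kk}=\tilde V_k^2$, and $\tan(\underline{\theta}_{ik})\,\mathrm{Re}(W_{ik})\le\mathrm{Im}(W_{ik})\le\tan(\overline{\theta}_{ik})\,\mathrm{Re}(W_{ik})$. With $\mathbf{Y}_{ik}=\begin{bmatrix}y_{ik}&-y_{ik}\\-y_{ik}&y_{ik}\end{bmatrix}$, define $\overline{\mathrm{conv}}(\mathcal{F}_{\theta_{ik}}(\tilde{\mathbf{v}}))=\{\mathrm{Re}(\mathrm{diag}(\mathbf{W}_{ik}\mathbf{Y}_{ik}^H)):\mathbf{W}\in\mathcal{H}_{ik}(\tilde{\mathbf{v}})\}\subset\mathbb{R}^2$ (interpreted as a pair $(P_{ik},P_{ki})$), $\overline{\mathrm{conv}}(\mathcal{F}_\theta(\tilde{\mathbf{v}}))=\prod_{(i,k)}\overline{\mathrm{conv}}(\mathcal{F}_{\theta_{ik}}(\tilde{\mathbf{v}}))$ and $\overline{\mathrm{conv}}(\mathcal{P}_\theta(\tilde{\mathbf{v}}))=\mathbf{A}\,\overline{\mathrm{conv}}(\mathcal{F}_\theta(\tilde{\mathbf{v}}))$. For $\mathcal{A}\subseteq\mathbb{R}^m$, $\mathcal{O}(\mathcal{A})$ is the set of Pareto-optimal points (no $y\in\mathcal{A}$ with $y\le x$ componentwise, strict in some coordinate). *)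

theory Defs
  imports "HOL-Analysis.Analysis"
begin

text \<open>Buses are the elements of a finite type 'v (playing the role of {1..n});
  vectors in R^n are real^'v.  Each line is listed once as an oriented pair (i,k).\<close>

definition tree_network :: "('v::finite \<times> 'v) set \<Rightarrow> bool" where
  "tree_network E \<longleftrightarrow>
     (\<forall>(i,k)\<in>E. i \<noteq> k \<and> (k,i) \<notin> E) \<and>
     (\<forall>i j. (i,j) \<in> (E \<union> E\<inverse>)\<^sup>*) \<and>
     card E + 1 = CARD('v)"

definition line_flow :: "real \<Rightarrow> real \<Rightarrow> real \<Rightarrow> real \<Rightarrow> real \<Rightarrow> real \<times> real" where
  "line_flow g b Vi Vk \<theta> =
     (Vi\<^sup>2 * g + Vi * Vk * b * sin \<theta> - Vi * Vk * g * cos \<theta>,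
      Vk\<^sup>2 * g - Vi * Vk * b * sin \<theta> - Vi * Vk * g * cos \<theta>)"

definition flow_set ::
  "('v \<times> 'v \<Rightarrow> real) \<Rightarrow> ('v \<times> 'v \<Rightarrow> real) \<Rightarrow> ('v \<times> 'v \<Rightarrow> real) \<Rightarrow> ('v \<times> 'v \<Rightarrow> real)
    \<Rightarrow> real^'v::finite \<Rightarrow> 'v \<times> 'v \<Rightarrow> (real \<times> real) set" where
  "flow_set g b lo hi v e =
     {line_flow (g e) (b e) (v $ fst e) (v $ snd e) \<theta> | \<theta>. lo e \<le> \<theta> \<and> \<theta> \<le> hi e}"

definition bus_injection :: "('v::finite \<times> 'v) set \<Rightarrow> ('v \<times> 'v \<Rightarrow> real \<times> real) \<Rightarrow> real^'v" where
  "bus_injection E f =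
     (\<chi> i. (\<Sum>e\<in>E. if fst e = i then fst (f e) else 0)
          + (\<Sum>e\<in>E. if snd e = i then snd (f e) else 0))"

definition A_image :: "('v::finite \<times> 'v) set \<Rightarrow> ('v \<times> 'v \<Rightarrow> (real \<times> real) set) \<Rightarrow> (real^'v) set" where
  "A_image E S = {bus_injection E f | f. \<forall>e\<in>E. f e \<in> S e}"

definition P_theta where
  "P_theta E g b lo hi v = A_image E (flow_set g b lo hi v)"

definition P_P :: "real^'v::finite \<Rightarrow> (real^'v) set" where
  "P_P Pbar = {p. \<forall>i. p $ i \<le> Pbar $ i}"

definition P_set where
  "P_set E g b lo hi Pbar v = P_theta E g b lo hi v \<inter> P_P Pbar"

definition hermitian_mat :: "complex^'v::finite^'v \<Rightarrow> bool" where
  "hermitian_mat W \<longleftrightarrow> (\<forall>i j. W $ i $ j = cnj (W $ j $ i))"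

definition psd_sub :: "complex^'v::finite^'v \<Rightarrow> 'v \<Rightarrow> 'v \<Rightarrow> bool" where
  "psd_sub W i k \<longleftrightarrow> (\<forall>z1 z2::complex.
      cnj z1 * (W $ i $ i * z1 + W $ i $ k * z2) + cnj z2 * (W $ k $ i * z1 + W $ k $ k * z2)
        \<in> \<real> \<and>
      0 \<le> Re (cnj z1 * (W $ i $ i * z1 + W $ i $ k * z2) + cnj z2 * (W $ k $ i * z1 + W $ k $ k * z2)))"

definition H_set :: "real \<Rightarrow> real \<Rightarrow> real^'v::finite \<Rightarrow> 'v \<Rightarrow> 'v \<Rightarrow> (complex^'v^'v) set" where
  "H_set lo hi v i k = {W. hermitian_mat W \<and> psd_sub W i k \<and>
      W $ i $ i = complex_of_real ((v $ i)\<^sup>2) \<and> W $ k $ k = complex_of_real ((v $ k)\<^sup>2) \<and>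
      tan lo * Re (W $ i $ k) \<le> Im (W $ i $ k) \<and> Im (W $ i $ k) \<le> tan hi * Re (W $ i $ k)}"

text \<open>Re(diag(W_ik Y_ik^H)) with Y_ik = [[y,-y],[-y,y]], y = g - j b:
  Y^H = [[cnj y, -cnj y],[-cnj y, cnj y]], so the diagonal of W_ik Y^H is
  ((W_ii - W_ik) cnj y, (W_kk - W_ki) cnj y).\<close>
definition conv_flow_set ::
  "('v \<times> 'v \<Rightarrow> real) \<Rightarrow> ('v \<times> 'v \<Rightarrow> real) \<Rightarrow> ('v \<times> 'v \<Rightarrow> real) \<Rightarrow> ('v \<times> 'v \<Rightarrow> real)
    \<Rightarrow> real^'v::finite \<Rightarrow> 'v \<times> 'v \<Rightarrow> (real \<times> real) set" where
  "conv_flow_set g b lo hi v e =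
     (let i = fst e; k = snd e; y = Complex (g e) (- b e) in
      {(Re ((W $ i $ i - W $ i $ k) * cnj y), Re ((W $ k $ k - W $ k $ i) * cnj y)) | W.
         W \<in> H_set (lo e) (hi e) v i k})"

definition conv_P_theta where
  "conv_P_theta E g b lo hi v = A_image E (conv_flow_set g b lo hi v)"

definition pareto :: "(real^'v::finite) set \<Rightarrow> (real^'v) set" where
  "pareto S = {x \<in> S. \<not> (\<exists>y\<in>S. (\<forall>i. y $ i \<le> x $ i) \<and> (\<exists>i. y $ i < x $ i))}"

end

theory Submission
  imports Defs
begin

text \<open>The relaxation is exact line by line. Every physical flow is attained by the
  rank-one matrix \<open>u u\<^sup>H\<close> with \<open>u\<^sub>i = V\<^sub>i e\<^sup>j\<^sup>\<theta>\<close>, \<open>u\<^sub>k = V\<^sub>k\<close>. Conversely, for an admissible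
  \<open>W\<close> with \<open>W\<^sub>i\<^sub>k = x + j y\<close>, positive semidefiniteness gives \<open>x\<^sup>2 + y\<^sup>2 \<le> (V\<^sub>i V\<^sub>k)\<^sup>2\<close> and the
  angle cone keeps \<open>y\<close> between \<open>V\<^sub>i V\<^sub>k sin \<theta>\<^sub>l\<^sub>o\<close> and \<open>V\<^sub>i V\<^sub>k sin \<theta>\<^sub>h\<^sub>i\<close>; the angle \<open>\<theta>\<close> with
  \<open>V\<^sub>i V\<^sub>k sin \<theta> = y\<close> then has \<open>V\<^sub>i V\<^sub>k cos \<theta> \<ge> x\<close>, and since \<open>g \<ge> 0\<close> its physical flows are
  componentwise below the relaxed ones. As \<open>A\<close> is monotone, every relaxed injection
  vector dominates a physical one, so both regions have the same Pareto front, also after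
  intersecting with the down-closed set of upper bounds. Convexity over a voltage box
  holds because the relaxed flows are linear in \<open>W\<close>, and a convex combination of
  admissible matrices with diagonals \<open>v\<^sub>1\<^sup>2\<close> and \<open>v\<^sub>2\<^sup>2\<close> is admissible for the root mean
  square of \<open>v\<^sub>1\<close> and \<open>v\<^sub>2\<close>, which stays in the box.\<close>

lemma pareto_eq_if_dominated:
  fixes S T :: "(real^'v::finite) set"
  assumes "S \<subseteq> T" and dom: "\<And>y. y \<in> T \<Longrightarrow> \<exists>z\<in>S. \<forall>i. z $ i \<le> y $ i"
  shows "pareto S = pareto T"
proof
  show "pareto S \<subseteq> pareto T"
  proof
    fix x assume "x \<in> pareto S"
    hence xS: "x \<in> S" and nd: "\<not> (\<exists>y\<in>S. (\<forall>i. y $ i \<le> x $ i) \<and> (\<exists>i. y $ i < x $ i))"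
      by (auto simp: pareto_def)
    have "\<not> (\<exists>y\<in>T. (\<forall>i. y $ i \<le> x $ i) \<and> (\<exists>i. y $ i < x $ i))"
    proof
      assume "\<exists>y\<in>T. (\<forall>i. y $ i \<le> x $ i) \<and> (\<exists>i. y $ i < x $ i)"
      then obtain y j where y: "y \<in> T" "\<forall>i. y $ i \<le> x $ i" "y $ j < x $ j" by blast
      then obtain z where "z \<in> S" "\<forall>i. z $ i \<le> y $ i" using dom by blast
      with y nd show False by (meson order_trans le_less_trans)
    qed
    thus "x \<in> pareto T" using xS assms(1) by (auto simp: pareto_def)
  qed
next
  show "pareto T \<subseteq> pareto S"
  proof
    fix x assume "x \<in> pareto T"
    hence xT: "x \<in> T" and nd: "\<not> (\<exists>y\<in>T. (\<forall>i. y $ i \<le> x $ i) \<and> (\<exists>i. y $ i < x $ i))"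
      by (auto simp: pareto_def)
    obtain z where z: "z \<in> S" "\<forall>i. z $ i \<le> x $ i" using dom xT by blast
    have "z = x"
    proof (rule ccontr)
      assume "z \<noteq> x"
      then obtain j where "z $ j \<noteq> x $ j" by (metis vec_eq_iff)
      with z have "z $ j < x $ j" by (meson order.not_eq_order_implies_strict)
      with z nd assms(1) show False by blast
    qed
    with z nd assms(1) show "x \<in> pareto S" by (auto simp: pareto_def)
  qed
qed

lemma pareto_inter_eq_if_dominated:
  fixes S T D :: "(real^'v::finite) set"
  assumes "S \<subseteq> T" and dom: "\<And>y. y \<in> T \<Longrightarrow> \<exists>z\<in>S. \<forall>i. z $ i \<le> y $ i"
    and down_closed: "\<And>x y. y \<in> D \<Longrightarrow> \<forall>i. x $ i \<le> y $ i \<Longrightarrow> x \<in> D"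
  shows "pareto (S \<inter> D) = pareto (T \<inter> D)"
proof (rule pareto_eq_if_dominated)
  show "S \<inter> D \<subseteq> T \<inter> D" using assms(1) by blast
  fix y assume y: "y \<in> T \<inter> D"
  then obtain z where "z \<in> S" "\<forall>i. z $ i \<le> y $ i" using dom by blast
  with y down_closed show "\<exists>z\<in>S \<inter> D. \<forall>i. z $ i \<le> y $ i" by blast
qed

lemma le_sin_if_tan_cone_disk:
  fixes x y R h :: real
  assumes cone: "y \<le> tan h * x" and h: "0 \<le> h" "h < pi/2"
    and disk: "x\<^sup>2 + y\<^sup>2 \<le> R\<^sup>2" and R: "0 \<le> R"
  shows "y \<le> R * sin h"
proof (cases "y \<le> 0")
  case True
  moreover have "0 \<le> sin h" using h by (intro sin_ge_zero) auto
  ultimately show ?thesis using R by (meson mult_nonneg_nonneg order_trans)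
next
  case False
  have c: "0 < cos h" using h by (intro cos_gt_zero_pi) auto
  have "y * cos h \<le> x * sin h"
    using mult_right_mono[OF cone less_imp_le[OF c]] c by (simp add: tan_def mult.commute)
  with False c have yx: "(y * cos h)\<^sup>2 \<le> (x * sin h)\<^sup>2"
    by (intro power_mono) auto
  have "y\<^sup>2 = y\<^sup>2 * ((cos h)\<^sup>2 + (sin h)\<^sup>2)" by (simp only: sin_cos_squared_add2 mult_1_right)
  also have "\<dots> = (y * cos h)\<^sup>2 + y\<^sup>2 * (sin h)\<^sup>2" by (simp only: distrib_left power_mult_distrib)
  also have "\<dots> \<le> (x * sin h)\<^sup>2 + y\<^sup>2 * (sin h)\<^sup>2" using yx by (rule add_right_mono)
  also have "\<dots> = (x\<^sup>2 + y\<^sup>2) * (sin h)\<^sup>2" by (simp only: distrib_right power_mult_distrib)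
  also have "\<dots> \<le> R\<^sup>2 * (sin h)\<^sup>2" using disk by (rule mult_right_mono) simp
  also have "\<dots> = (R * sin h)\<^sup>2" by (simp only: power_mult_distrib)
  finally have "y\<^sup>2 \<le> (R * sin h)\<^sup>2" .
  moreover have "0 \<le> sin h" using h by (intro sin_ge_zero) auto
  ultimately show ?thesis using R by (auto intro: power2_le_imp_le)
qed

lemma obtain_angle_with_sin_eq:
  fixes x y R lo hi :: real
  assumes ang: "- (pi/2) \<le> lo" "lo \<le> hi" "hi \<le> pi/2" and R: "0 < R"
    and y: "R * sin lo \<le> y" "y \<le> R * sin hi" and disk: "x\<^sup>2 + y\<^sup>2 \<le> R\<^sup>2"
  obtains \<theta> where "lo \<le> \<theta>" "\<theta> \<le> hi" "R * sin \<theta> = y" "x \<le> R * cos \<theta>"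
proof
  define \<theta> where "\<theta> = arcsin (y / R)"
  have yR: "sin lo \<le> y / R" "y / R \<le> sin hi" using y R by (simp_all add: field_simps)
  hence yb: "-1 \<le> y / R" "y / R \<le> 1" using sin_ge_minus_one sin_le_one by (metis order_trans)+
  have "lo = arcsin (sin lo)" using ang by (intro arcsin_sin[symmetric]) auto
  also have "\<dots> \<le> \<theta>" unfolding \<theta>_def using yR yb by (intro arcsin_le_arcsin) auto
  finally show "lo \<le> \<theta>" .
  have "\<theta> \<le> arcsin (sin hi)" unfolding \<theta>_def using yR yb by (intro arcsin_le_arcsin) auto
  also have "\<dots> = hi" using ang by (intro arcsin_sin) auto
  finally show "\<theta> \<le> hi" .
  show "R * sin \<theta> = y" unfolding \<theta>_def using yb R by simp
  have "x \<le> sqrt (R\<^sup>2 - y\<^sup>2)" using disk by (intro real_le_rsqrt) simp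
  also have "R\<^sup>2 - y\<^sup>2 = R\<^sup>2 * (1 - (y / R)\<^sup>2)" using R by (simp add: field_simps)
  also have "sqrt \<dots> = R * cos \<theta>" unfolding \<theta>_def using R yb by (simp add: real_sqrt_mult cos_arcsin)
  finally show "x \<le> R * cos \<theta>" .
qed

lemma tan_cone_contains_angle:
  fixes lo hi \<theta> :: real
  assumes "- (pi/2) < lo" "lo \<le> \<theta>" "\<theta> \<le> hi" "hi < pi/2"
  shows "tan lo * cos \<theta> \<le> sin \<theta>" and "sin \<theta> \<le> tan hi * cos \<theta>"
proof -
  have c: "0 < cos \<theta>" using assms by (intro cos_gt_zero_pi) auto
  have "tan lo \<le> tan \<theta>" "tan \<theta> \<le> tan hi" using assms by (auto intro: tan_mono_le)
  with c show "tan lo * cos \<theta> \<le> sin \<theta>" "sin \<theta> \<le> tan hi * cos \<theta>"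
    by (auto simp: tan_def divide_simps)
qed

lemma psd_sub_offdiag_sq_le:
  fixes W :: "complex^'v::finite^'v"
  assumes h: "hermitian_mat W" and p: "psd_sub W i k"
    and di: "W $ i $ i = complex_of_real (Vi\<^sup>2)" and dk: "W $ k $ k = complex_of_real (Vk\<^sup>2)"
    and Vk: "Vk \<noteq> 0"
  shows "(Re (W $ i $ k))\<^sup>2 + (Im (W $ i $ k))\<^sup>2 \<le> (Vi * Vk)\<^sup>2"
proof -
  define w where "w = W $ i $ k"
  have wki: "W $ k $ i = cnj w" using h unfolding hermitian_mat_def w_def by (metis complex_cnj_cnj)
  define z1 :: complex where "z1 = of_real Vk"
  define z2 :: complex where "z2 = - cnj w / of_real Vk"
  have "0 \<le> Re (cnj z1 * (W $ i $ i * z1 + W $ i $ k * z2) + cnj z2 * (W $ k $ i * z1 + W $ k $ k * z2))"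
    using p unfolding psd_sub_def by blast
  also have "cnj z1 * (W $ i $ i * z1 + W $ i $ k * z2) + cnj z2 * (W $ k $ i * z1 + W $ k $ k * z2)
     = of_real ((Vi * Vk)\<^sup>2) - w * cnj w"
    using Vk unfolding z1_def z2_def di dk wki w_def[symmetric]
    by (simp add: field_simps power2_eq_square)
  finally show ?thesis unfolding w_def[symmetric]
    by (simp add: complex_mult_cnj power2_eq_square)
qed

definition outer_prod :: "('v::finite \<Rightarrow> complex) \<Rightarrow> complex^'v^'v" where
  "outer_prod u = (\<chi> p q. u p * cnj (u q))"

lemma outer_prod_nth [simp]: "outer_prod u $ p $ q = u p * cnj (u q)"
  by (simp add: outer_prod_def)

lemma hermitian_outer_prod: "hermitian_mat (outer_prod u)"
  by (simp add: hermitian_mat_def)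

lemma psd_sub_outer_prod: "psd_sub (outer_prod u) i k"
  unfolding psd_sub_def
proof (intro allI)
  fix z1 z2 :: complex
  define s where "s = cnj (u i) * z1 + cnj (u k) * z2"
  have "cnj z1 * (outer_prod u $ i $ i * z1 + outer_prod u $ i $ k * z2)
          + cnj z2 * (outer_prod u $ k $ i * z1 + outer_prod u $ k $ k * z2) = cnj s * s"
    by (simp add: s_def algebra_simps)
  thus "cnj z1 * (outer_prod u $ i $ i * z1 + outer_prod u $ i $ k * z2)
          + cnj z2 * (outer_prod u $ k $ i * z1 + outer_prod u $ k $ k * z2) \<in> \<real> \<and>
        0 \<le> Re (cnj z1 * (outer_prod u $ i $ i * z1 + outer_prod u $ i $ k * z2)
          + cnj z2 * (outer_prod u $ k $ i * z1 + outer_prod u $ k $ k * z2))"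
    by (simp add: complex_is_Real_iff)
qed

definition sdp_flow :: "complex \<Rightarrow> 'v \<Rightarrow> 'v \<Rightarrow> complex^'v::finite^'v \<Rightarrow> real \<times> real" where
  "sdp_flow y i k W = (Re ((W $ i $ i - W $ i $ k) * cnj y), Re ((W $ k $ k - W $ k $ i) * cnj y))"

lemma conv_flow_set_eq_image:
  "conv_flow_set g b lo hi v e =
     sdp_flow (Complex (g e) (- b e)) (fst e) (snd e) ` H_set (lo e) (hi e) v (fst e) (snd e)"
  unfolding conv_flow_set_def sdp_flow_def Let_def by auto

lemma flow_set_subset_conv_flow_set:
  fixes v :: "real^'v::finite"
  assumes ik: "fst e \<noteq> snd e" and ang: "- (pi/2) < lo e" "hi e < pi/2"
    and pos: "0 \<le> v $ fst e" "0 \<le> v $ snd e"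
  shows "flow_set g b lo hi v e \<subseteq> conv_flow_set g b lo hi v e"
proof
  fix q assume "q \<in> flow_set g b lo hi v e"
  then obtain \<theta> where th: "lo e \<le> \<theta>" "\<theta> \<le> hi e"
    and q: "q = line_flow (g e) (b e) (v $ fst e) (v $ snd e) \<theta>"
    unfolding flow_set_def by auto
  define i k where "i = fst e" and "k = snd e"
  define u where "u p = (if p = i then rcis (v $ i) \<theta> else if p = k then of_real (v $ k) else 0)" for p
  define W where "W = outer_prod u"
  have Wii: "W $ i $ i = of_real ((v $ i)\<^sup>2)"
    by (simp add: W_def u_def complex_mult_cnj power_mult_distrib flip: distrib_left)
  have Wkk: "W $ k $ k = of_real ((v $ k)\<^sup>2)" using ik by (simp add: W_def u_def i_def k_def power2_eq_square)
  have Wik: "W $ i $ k = rcis (v $ i * v $ k) \<theta>" and Wki: "W $ k $ i = cnj (rcis (v $ i * v $ k) \<theta>)"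
    using ik by (simp_all add: W_def u_def i_def k_def complex_eq_iff)
  have "tan (lo e) * (v $ i * v $ k * cos \<theta>) \<le> v $ i * v $ k * sin \<theta>"
    "v $ i * v $ k * sin \<theta> \<le> tan (hi e) * (v $ i * v $ k * cos \<theta>)"
    using mult_left_mono[OF tan_cone_contains_angle(1)[OF ang(1) th ang(2)], of "v $ i * v $ k"]
      mult_left_mono[OF tan_cone_contains_angle(2)[OF ang(1) th ang(2)], of "v $ i * v $ k"] pos
    by (simp_all add: i_def k_def mult_ac)
  moreover have "hermitian_mat W" "psd_sub W i k"
    unfolding W_def by (rule hermitian_outer_prod psd_sub_outer_prod)+
  ultimately have "W \<in> H_set (lo e) (hi e) v i k"
    unfolding H_set_def using Wii Wkk Wik by simp
  moreover have "q = sdp_flow (Complex (g e) (- b e)) i k W"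
    unfolding q sdp_flow_def Wii Wkk Wik Wki line_flow_def i_def[symmetric] k_def[symmetric]
    by (simp add: algebra_simps)
  ultimately show "q \<in> conv_flow_set g b lo hi v e"
    unfolding conv_flow_set_eq_image i_def k_def by blast
qed

lemma conv_flow_dominated_by_flow:
  fixes v :: "real^'v::finite"
  assumes g: "0 \<le> g e" and ang: "- (pi/2) < lo e" "lo e \<le> 0" "0 \<le> hi e" "hi e < pi/2"
    and pos: "0 < v $ fst e" "0 < v $ snd e"
    and p: "p \<in> conv_flow_set g b lo hi v e"
  shows "\<exists>q\<in>flow_set g b lo hi v e. fst q \<le> fst p \<and> snd q \<le> snd p"
proof -
  define i k where "i = fst e" and "k = snd e"
  from p obtain W where W: "W \<in> H_set (lo e) (hi e) v i k"
    and p_eq: "p = sdp_flow (Complex (g e) (- b e)) i k W"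
    unfolding conv_flow_set_eq_image i_def k_def by blast
  define R where "R = v $ i * v $ k"
  define x y where "x = Re (W $ i $ k)" and "y = Im (W $ i $ k)"
  have R: "0 < R" using pos by (simp add: R_def i_def k_def)
  have herm: "hermitian_mat W" and Wii: "W $ i $ i = of_real ((v $ i)\<^sup>2)"
    and Wkk: "W $ k $ k = of_real ((v $ k)\<^sup>2)"
    and cone: "tan (lo e) * x \<le> y" "y \<le> tan (hi e) * x"
    using W by (simp_all add: H_set_def x_def y_def)
  have Wki: "W $ k $ i = cnj (W $ i $ k)"
    using herm unfolding hermitian_mat_def by (metis complex_cnj_cnj)
  have disk: "x\<^sup>2 + y\<^sup>2 \<le> R\<^sup>2"
    using psd_sub_offdiag_sq_le[OF herm _ Wii Wkk] W pos
    by (simp add: H_set_def x_def y_def R_def k_def)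
  have "y \<le> R * sin (hi e)"
    using le_sin_if_tan_cone_disk[OF cone(2) ang(3,4) disk] R by simp
  moreover have "- y \<le> R * sin (- lo e)"
    using le_sin_if_tan_cone_disk[of "- y" "- lo e" x R] cone(1) ang(1,2) disk R by simp
  ultimately obtain \<theta> where th: "lo e \<le> \<theta>" "\<theta> \<le> hi e" "R * sin \<theta> = y" "x \<le> R * cos \<theta>"
    using obtain_angle_with_sin_eq[of "lo e" "hi e" R y x] ang R disk by auto
  have "g e * x \<le> g e * (R * cos \<theta>)" using th(4) g by (rule mult_left_mono)
  moreover have "Im (W $ i $ k) = R * sin \<theta>" using th(3) by (simp add: y_def)
  ultimately have "fst (line_flow (g e) (b e) (v $ i) (v $ k) \<theta>) \<le> fst p"
    and "snd (line_flow (g e) (b e) (v $ i) (v $ k) \<theta>) \<le> snd p"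
    unfolding p_eq sdp_flow_def line_flow_def Wii Wkk Wki
    by (simp_all add: x_def R_def algebra_simps)
  moreover have "line_flow (g e) (b e) (v $ i) (v $ k) \<theta> \<in> flow_set g b lo hi v e"
    unfolding flow_set_def i_def k_def using th(1,2) by auto
  ultimately show ?thesis by blast
qed

lemma A_image_mono:
  assumes "\<And>e. e \<in> E \<Longrightarrow> S e \<subseteq> T e"
  shows "A_image E S \<subseteq> A_image E T"
  using assms unfolding A_image_def by blast

lemma bus_injection_mono:
  assumes "\<forall>e\<in>E. fst (f e) \<le> fst (f' e) \<and> snd (f e) \<le> snd (f' e)"
  shows "bus_injection E f $ i \<le> bus_injection E f' $ i"
  unfolding bus_injection_def using assms by (auto intro!: add_mono sum_mono)

lemma A_image_dominated:
  assumes dom: "\<And>e p. e \<in> E \<Longrightarrow> p \<in> T e \<Longrightarrow> \<exists>q\<in>S e. fst q \<le> fst p \<and> snd q \<le> snd p"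
    and y: "y \<in> A_image E T"
  shows "\<exists>z\<in>A_image E S. \<forall>i. z $ i \<le> y $ i"
proof -
  obtain f where y_eq: "y = bus_injection E f" and f: "\<forall>e\<in>E. f e \<in> T e"
    using y unfolding A_image_def by blast
  have "\<forall>e\<in>E. \<exists>q. q \<in> S e \<and> fst q \<le> fst (f e) \<and> snd q \<le> snd (f e)"
    using dom f by blast
  then obtain f' where f': "\<forall>e\<in>E. f' e \<in> S e \<and> fst (f' e) \<le> fst (f e) \<and> snd (f' e) \<le> snd (f e)"
    by metis
  hence "bus_injection E f' \<in> A_image E S" unfolding A_image_def by blast
  moreover have "\<forall>i. bus_injection E f' $ i \<le> y $ i"
    unfolding y_eq using f' by (blast intro: bus_injection_mono)
  ultimately show ?thesis by blast
qed

lemma bus_injection_lincomb: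
  "a *\<^sub>R bus_injection E f1 + c *\<^sub>R bus_injection E f2 = bus_injection E (\<lambda>e. a *\<^sub>R f1 e + c *\<^sub>R f2 e)"
proof -
  have if_lincomb: "(if P then a * u + c * w else 0) = a * (if P then u else 0) + c * (if P then w else 0)"
    for P and u w :: real
    by simp
  show ?thesis
    unfolding bus_injection_def vec_eq_iff
    by (simp add: if_lincomb sum.distrib sum_distrib_left algebra_simps cong: if_cong)
qed

lemma A_image_lincomb:
  assumes comb: "\<And>e p1 p2. e \<in> E \<Longrightarrow> p1 \<in> S1 e \<Longrightarrow> p2 \<in> S2 e \<Longrightarrow> a *\<^sub>R p1 + c *\<^sub>R p2 \<in> S e"
    and "x \<in> A_image E S1" and "y \<in> A_image E S2"
  shows "a *\<^sub>R x + c *\<^sub>R y \<in> A_image E S"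
proof -
  obtain f1 f2 where x: "x = bus_injection E f1" and f1: "\<forall>e\<in>E. f1 e \<in> S1 e"
    and y: "y = bus_injection E f2" and f2: "\<forall>e\<in>E. f2 e \<in> S2 e"
    using assms(2,3) unfolding A_image_def by blast
  have "\<forall>e\<in>E. a *\<^sub>R f1 e + c *\<^sub>R f2 e \<in> S e" using comb f1 f2 by blast
  thus ?thesis unfolding A_image_def x y bus_injection_lincomb by blast
qed

lemma H_set_lincomb:
  fixes W1 W2 :: "complex^'v::finite^'v" and v1 v2 v :: "real^'v"
  assumes W1: "W1 \<in> H_set lo hi v1 i k" and W2: "W2 \<in> H_set lo hi v2 i k"
    and a: "0 \<le> a" and c: "0 \<le> c"
    and vi: "(v $ i)\<^sup>2 = a * (v1 $ i)\<^sup>2 + c * (v2 $ i)\<^sup>2"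
    and vk: "(v $ k)\<^sup>2 = a * (v1 $ k)\<^sup>2 + c * (v2 $ k)\<^sup>2"
  shows "a *\<^sub>R W1 + c *\<^sub>R W2 \<in> H_set lo hi v i k"
proof -
  define W where "W = a *\<^sub>R W1 + c *\<^sub>R W2"
  have Wc: "W $ p $ q = a *\<^sub>R W1 $ p $ q + c *\<^sub>R W2 $ p $ q" for p q by (simp add: W_def)
  from W1 have h1: "hermitian_mat W1" "psd_sub W1 i k" "W1 $ i $ i = of_real ((v1 $ i)\<^sup>2)"
    "W1 $ k $ k = of_real ((v1 $ k)\<^sup>2)"
    "tan lo * Re (W1 $ i $ k) \<le> Im (W1 $ i $ k)" "Im (W1 $ i $ k) \<le> tan hi * Re (W1 $ i $ k)"
    by (auto simp: H_set_def)
  from W2 have h2: "hermitian_mat W2" "psd_sub W2 i k" "W2 $ i $ i = of_real ((v2 $ i)\<^sup>2)"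
    "W2 $ k $ k = of_real ((v2 $ k)\<^sup>2)"
    "tan lo * Re (W2 $ i $ k) \<le> Im (W2 $ i $ k)" "Im (W2 $ i $ k) \<le> tan hi * Re (W2 $ i $ k)"
    by (auto simp: H_set_def)
  have "hermitian_mat W"
    unfolding hermitian_mat_def
  proof (intro allI)
    fix p q
    have "W1 $ p $ q = cnj (W1 $ q $ p)" "W2 $ p $ q = cnj (W2 $ q $ p)"
      using h1(1) h2(1) unfolding hermitian_mat_def by blast+
    thus "W $ p $ q = cnj (W $ q $ p)" unfolding Wc by simp
  qed
  moreover have "psd_sub W i k"
    unfolding psd_sub_def
  proof (intro allI)
    fix z1 z2 :: complex
    define Q where "Q M = cnj z1 * (M $ i $ i * z1 + M $ i $ k * z2) + cnj z2 * (M $ k $ i * z1 + M $ k $ k * z2)"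
      for M :: "complex^'v^'v"
    have "Q W1 \<in> \<real>" "0 \<le> Re (Q W1)" "Q W2 \<in> \<real>" "0 \<le> Re (Q W2)"
      using h1(2) h2(2) unfolding psd_sub_def Q_def by blast+
    moreover have "Q W = a *\<^sub>R Q W1 + c *\<^sub>R Q W2"
      unfolding Q_def Wc by (simp add: algebra_simps)
    ultimately show "Q W \<in> \<real> \<and> 0 \<le> Re (Q W)"
      using a c by (auto simp: scaleR_conv_of_real)
  qed
  moreover have "W $ i $ i = of_real ((v $ i)\<^sup>2)" "W $ k $ k = of_real ((v $ k)\<^sup>2)"
    unfolding Wc h1(3,4) h2(3,4) vi vk by (simp_all add: scaleR_conv_of_real)
  moreover have "tan lo * Re (W $ i $ k) \<le> Im (W $ i $ k)" "Im (W $ i $ k) \<le> tan hi * Re (W $ i $ k)"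
    using mult_left_mono[OF h1(5) a] mult_left_mono[OF h2(5) c]
      mult_left_mono[OF h1(6) a] mult_left_mono[OF h2(6) c]
    unfolding Wc by (simp_all add: algebra_simps)
  ultimately show ?thesis unfolding H_set_def W_def by blast
qed

lemma sdp_flow_lincomb:
  "sdp_flow y i k (a *\<^sub>R W1 + c *\<^sub>R W2) = a *\<^sub>R sdp_flow y i k W1 + c *\<^sub>R sdp_flow y i k W2"
  by (simp add: sdp_flow_def algebra_simps)

lemma conv_flow_set_lincomb:
  fixes v1 v2 v :: "real^'v::finite"
  assumes "p1 \<in> conv_flow_set g b lo hi v1 e" and "p2 \<in> conv_flow_set g b lo hi v2 e"
    and "0 \<le> a" and "0 \<le> c" and v: "\<And>i. (v $ i)\<^sup>2 = a * (v1 $ i)\<^sup>2 + c * (v2 $ i)\<^sup>2"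
  shows "a *\<^sub>R p1 + c *\<^sub>R p2 \<in> conv_flow_set g b lo hi v e"
proof -
  obtain W1 W2 where "W1 \<in> H_set (lo e) (hi e) v1 (fst e) (snd e)"
    and "W2 \<in> H_set (lo e) (hi e) v2 (fst e) (snd e)"
    and "p1 = sdp_flow (Complex (g e) (- b e)) (fst e) (snd e) W1"
    and "p2 = sdp_flow (Complex (g e) (- b e)) (fst e) (snd e) W2"
    using assms(1,2) unfolding conv_flow_set_eq_image by blast
  with H_set_lincomb[OF _ _ assms(3,4) v v] show ?thesis
    unfolding conv_flow_set_eq_image by (auto simp flip: sdp_flow_lincomb)
qed

lemma sqrt_convex_comb_squares_bounds:
  fixes l u x1 x2 a c :: real
  assumes "0 \<le> l" "l \<le> x1" "x1 \<le> u" "l \<le> x2" "x2 \<le> u"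
    and "0 \<le> a" "0 \<le> c" "a + c = 1"
  shows "l \<le> sqrt (a * x1\<^sup>2 + c * x2\<^sup>2)" and "sqrt (a * x1\<^sup>2 + c * x2\<^sup>2) \<le> u"
proof -
  have "l\<^sup>2 \<le> x1\<^sup>2" "l\<^sup>2 \<le> x2\<^sup>2" "x1\<^sup>2 \<le> u\<^sup>2" "x2\<^sup>2 \<le> u\<^sup>2"
    using assms by (auto intro: power_mono)
  hence "a * l\<^sup>2 + c * l\<^sup>2 \<le> a * x1\<^sup>2 + c * x2\<^sup>2" "a * x1\<^sup>2 + c * x2\<^sup>2 \<le> u\<^sup>2"
    using assms(6-8) by (auto intro: add_mono mult_left_mono convex_bound_le)
  moreover have "a * l\<^sup>2 + c * l\<^sup>2 = l\<^sup>2" using assms(8) by (simp flip: distrib_right)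
  moreover have "0 \<le> u" using assms(1-3) by linarith
  ultimately show "l \<le> sqrt (a * x1\<^sup>2 + c * x2\<^sup>2)" "sqrt (a * x1\<^sup>2 + c * x2\<^sup>2) \<le> u"
    by (auto intro: real_le_rsqrt real_le_lsqrt)
qed

lemma convex_Union_conv_P_theta_box:
  fixes vlo vhi :: "real^'v::finite"
  assumes nonneg: "\<forall>i. 0 \<le> vlo $ i"
  shows "convex (\<Union>v \<in> {v. \<forall>i. vlo $ i \<le> v $ i \<and> v $ i \<le> vhi $ i}. conv_P_theta E g b lo hi v)"
proof (rule convexI)
  fix x y :: "real^'v" and a c :: real
  assume "x \<in> (\<Union>v \<in> {v. \<forall>i. vlo $ i \<le> v $ i \<and> v $ i \<le> vhi $ i}. conv_P_theta E g b lo hi v)"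
    and "y \<in> (\<Union>v \<in> {v. \<forall>i. vlo $ i \<le> v $ i \<and> v $ i \<le> vhi $ i}. conv_P_theta E g b lo hi v)"
    and a: "0 \<le> a" and c: "0 \<le> c" and ac: "a + c = 1"
  then obtain v1 v2 where v1: "\<forall>i. vlo $ i \<le> v1 $ i \<and> v1 $ i \<le> vhi $ i"
    and v2: "\<forall>i. vlo $ i \<le> v2 $ i \<and> v2 $ i \<le> vhi $ i"
    and x: "x \<in> conv_P_theta E g b lo hi v1" and y: "y \<in> conv_P_theta E g b lo hi v2"
    by blast
  define v :: "real^'v" where "v = (\<chi> i. sqrt (a * (v1 $ i)\<^sup>2 + c * (v2 $ i)\<^sup>2))"
  have v_sq: "(v $ i)\<^sup>2 = a * (v1 $ i)\<^sup>2 + c * (v2 $ i)\<^sup>2" for i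
    unfolding v_def using a c by simp
  have "vlo $ i \<le> v $ i \<and> v $ i \<le> vhi $ i" for i
    using sqrt_convex_comb_squares_bounds[of "vlo $ i" "v1 $ i" "vhi $ i" "v2 $ i" a c] nonneg v1 v2 a c ac
    by (simp add: v_def)
  moreover have "a *\<^sub>R x + c *\<^sub>R y \<in> conv_P_theta E g b lo hi v"
    using x y conv_flow_set_lincomb[OF _ _ a c v_sq] unfolding conv_P_theta_def
    by (blast intro: A_image_lincomb)
  ultimately show "a *\<^sub>R x + c *\<^sub>R y \<in> (\<Union>v \<in> {v. \<forall>i. vlo $ i \<le> v $ i \<and> v $ i \<le> vhi $ i}. conv_P_theta E g b lo hi v)"
    by blast
qed

lemma P_theta_subset_conv_P_theta:
  fixes v :: "real^'v::finite"
  assumes "\<forall>e\<in>E. fst e \<noteq> snd e \<and> - (pi/2) < lo e \<and> hi e < pi/2" and "\<forall>i. 0 \<le> v $ i"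
  shows "P_theta E g b lo hi v \<subseteq> conv_P_theta E g b lo hi v"
  unfolding P_theta_def conv_P_theta_def
  using assms by (intro A_image_mono flow_set_subset_conv_flow_set) auto

lemma conv_P_theta_dominated_by_P_theta:
  fixes v :: "real^'v::finite"
  assumes "\<forall>e\<in>E. 0 \<le> g e" and "\<forall>e\<in>E. - (pi/2) < lo e \<and> lo e \<le> 0 \<and> 0 \<le> hi e \<and> hi e < pi/2"
    and "\<forall>i. 0 < v $ i" and "y \<in> conv_P_theta E g b lo hi v"
  shows "\<exists>z\<in>P_theta E g b lo hi v. \<forall>i. z $ i \<le> y $ i"
  using assms unfolding P_theta_def conv_P_theta_def
  by (intro A_image_dominated[of E]) (auto intro: conv_flow_dominated_by_flow)

theorem lemma4:
  fixes E :: "('v::finite \<times> 'v) set"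
    and g b lo hi :: "'v \<times> 'v \<Rightarrow> real"
    and Pbar :: "real^'v"
  assumes tree: "tree_network E"
    and adm: "\<forall>e\<in>E. 0 \<le> g e \<and> 0 \<le> b e"
    and ang: "\<forall>e\<in>E. - (pi/2) < lo e \<and> lo e \<le> 0 \<and> 0 \<le> hi e \<and> hi e < pi/2"
  shows "(\<forall>v::real^'v. (\<forall>i. 0 < v $ i) \<longrightarrow>
            pareto (P_theta E g b lo hi v) = pareto (conv_P_theta E g b lo hi v) \<and>
            pareto (P_set E g b lo hi Pbar v) = pareto (conv_P_theta E g b lo hi v \<inter> P_P Pbar))
       \<and> (\<forall>vlo vhi :: real^'v. (\<forall>i. 0 < vlo $ i \<and> vlo $ i \<le> vhi $ i) \<longrightarrow>
            convex (\<Union>v \<in> {v. \<forall>i. vlo $ i \<le> v $ i \<and> v $ i \<le> vhi $ i}. conv_P_theta E g b lo hi v))"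
proof (intro conjI allI impI)
  fix v :: "real^'v" assume pos: "\<forall>i. 0 < v $ i"
  have "\<forall>e\<in>E. fst e \<noteq> snd e" using tree unfolding tree_network_def by auto
  hence sub: "P_theta E g b lo hi v \<subseteq> conv_P_theta E g b lo hi v"
    using ang pos by (intro P_theta_subset_conv_P_theta) (auto intro: less_imp_le)
  have dom: "\<exists>z\<in>P_theta E g b lo hi v. \<forall>i. z $ i \<le> y $ i" if "y \<in> conv_P_theta E g b lo hi v" for y
    using adm ang pos that by (intro conv_P_theta_dominated_by_P_theta) auto
  show "pareto (P_theta E g b lo hi v) = pareto (conv_P_theta E g b lo hi v)"
    by (rule pareto_eq_if_dominated[OF sub dom])
  show "pareto (P_set E g b lo hi Pbar v) = pareto (conv_P_theta E g b lo hi v \<inter> P_P Pbar)"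
    unfolding P_set_def
    by (rule pareto_inter_eq_if_dominated[OF sub dom]) (auto simp: P_P_def intro: order_trans)
next
  fix vlo vhi :: "real^'v" assume "\<forall>i. 0 < vlo $ i \<and> vlo $ i \<le> vhi $ i"
  thus "convex (\<Union>v \<in> {v. \<forall>i. vlo $ i \<le> v $ i \<and> v $ i \<le> vhi $ i}. conv_P_theta E g b lo hi v)"
    by (intro convex_Union_conv_P_theta_box) (auto intro: less_imp_le)
qed

end
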